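(* Let $p$ and $q$ be two different odd primes and let $a\in(\mathbb{Z}/pq\mathbb{Z})^*$ be such that $a\bmod p$ generates $(\mathbb{Z}/p\mathbb{Z})^*$ and $a^{(p-1)/2}\equiv-1\pmod{pq}$. Let $S=S_{pq}(a)$ and $\lambda=|S\cap(S+1)|$. If $\lambda\equiv-2\pmod q$, then with $t=(\lambda+2)/q$ and any permutations $\pi_2,\dots,\pi_t$ of $\{1,\dots,p\}$, the graph $F_{(\pi_2,\dots,\pi_t)}(\Gamma_{pq}(a))$ is a Neumaier graph with parameters $(tpq,\,p+\lambda,\,\lambda;\,1,\,\lambda+2)$.
   Context: $S_{pq}(a)=\{a^j: 0\le j<p-1\}\subseteq\mathbb{Z}/pq\mathbb{Z}$, and $\Gamma_{pq}(a)$ is the Cayley graph on $(\mathbb{Z}/pq\mathbb{Z},+)$ with connection set $S_{pq}(a)$ ($x\sim y$ iff $x-y\in S_{pq}(a)$); $S+1=\{s+1:s\in S\}$. Its vertex set is partitioned into the $p$ cosets $C_1,\dots,C_p$ (in some fixed order) of the additive subgroup generated by $p$. Construction $F$: take $t$ disjoint copies $\Gamma_1,\dots,\Gamma_t$ of $\Gamma_{pq}(a)$, with $C_{i,r}$ the copy of $C_r$ in $\Gamma_i$, and set $\pi_1=\mathrm{id}$; $F_{(\pi_2,\dots,\pi_t)}(\Gamma_{pq}(a))$ has vertex set the union of the copies, and distinct $x\in C_{i,k'}$, $y\in C_{j,l'}$ are adjacent iff ($i=j$ and $x\sim y$ in $\Gamma_i$) or $\pi_i^{-1}(k')=\pi_j^{-1}(l')$.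 A regular graph is $\lambda$-edge-regular if it has at least one edge and any two adjacent vertices have exactly $\lambda$ common neighbours. A Neumaier graph with parameters $(v,k,\lambda;e,s)$ is a non-complete $k$-regular, $\lambda$-edge-regular graph on $v$ vertices containing a clique of size $s$ such that every vertex outside it has exactly $e>0$ neighbours in it. *)

theory Defs
  imports "HOL-Number_Theory.Number_Theory" "HOL-Combinatorics.Permutations"
begin

definition simple_graph :: "'v set \<Rightarrow> ('v \<Rightarrow> 'v \<Rightarrow> bool) \<Rightarrow> bool" where
  "simple_graph V E \<longleftrightarrow> finite V \<and> (\<forall>x\<in>V. \<forall>y\<in>V. E x y \<longleftrightarrow> E y x) \<and> (\<forall>x\<in>V. \<not> E x x)"

definition nbrs :: "'v set \<Rightarrow> ('v \<Rightarrow> 'v \<Rightarrow> bool) \<Rightarrow> 'v \<Rightarrow> 'v set" where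
  "nbrs V E x = {y \<in> V. E x y}"

definition regular_graph :: "'v set \<Rightarrow> ('v \<Rightarrow> 'v \<Rightarrow> bool) \<Rightarrow> nat \<Rightarrow> bool" where
  "regular_graph V E k \<longleftrightarrow> (\<forall>x\<in>V. card (nbrs V E x) = k)"

definition edge_regular :: "'v set \<Rightarrow> ('v \<Rightarrow> 'v \<Rightarrow> bool) \<Rightarrow> nat \<Rightarrow> bool" where
  "edge_regular V E lam \<longleftrightarrow> (\<exists>k. regular_graph V E k)
     \<and> (\<exists>x\<in>V. \<exists>y\<in>V. E x y)
     \<and> (\<forall>x\<in>V. \<forall>y\<in>V. E x y \<longrightarrow> card (nbrs V E x \<inter> nbrs V E y) = lam)"

definition is_clique :: "'v set \<Rightarrow> ('v \<Rightarrow> 'v \<Rightarrow> bool) \<Rightarrow> 'v set \<Rightarrow> bool" where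
  "is_clique V E C \<longleftrightarrow> C \<subseteq> V \<and> (\<forall>x\<in>C. \<forall>y\<in>C. x \<noteq> y \<longrightarrow> E x y)"

definition complete_graph :: "'v set \<Rightarrow> ('v \<Rightarrow> 'v \<Rightarrow> bool) \<Rightarrow> bool" where
  "complete_graph V E \<longleftrightarrow> (\<forall>x\<in>V. \<forall>y\<in>V. x \<noteq> y \<longrightarrow> E x y)"

definition neumaier_graph ::
  "'v set \<Rightarrow> ('v \<Rightarrow> 'v \<Rightarrow> bool) \<Rightarrow> nat \<Rightarrow> nat \<Rightarrow> nat \<Rightarrow> nat \<Rightarrow> nat \<Rightarrow> bool" where
  "neumaier_graph V E v k lam e s \<longleftrightarrow>
     simple_graph V E \<and> card V = v \<and> \<not> complete_graph V E
     \<and> regular_graph V E k \<and> edge_regular V E lam \<and> e > 0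
     \<and> (\<exists>C. is_clique V E C \<and> card C = s
            \<and> (\<forall>x\<in>V - C. card (nbrs V E x \<inter> C) = e))"

section \<open>The Cayley graph Gamma_pq(a) on Z/pqZ, represented by {0..<p*q}\<close>

definition S_pq :: "nat \<Rightarrow> nat \<Rightarrow> nat \<Rightarrow> nat set" where
  "S_pq p q a = {a ^ j mod (p * q) | j. j < p - 1}"

definition shift1 :: "nat \<Rightarrow> nat set \<Rightarrow> nat set" where
  "shift1 n S = {(s + 1) mod n | s. s \<in> S}"

definition Gamma_adj :: "nat \<Rightarrow> nat \<Rightarrow> nat \<Rightarrow> nat \<Rightarrow> nat \<Rightarrow> bool" where
  "Gamma_adj p q a x y \<longleftrightarrow> nat ((int x - int y) mod int (p * q)) \<in> S_pq p q a"

text \<open>Vertices: pairs (i,x) with copy index i in {1..t} and x in Z/pqZ.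
  The cosets of the subgroup generated by p are the sets {x. x mod p = r}, r < p;
  their fixed ordering C_1,...,C_p is given by a bijection c from {0..<p} to {1..p}
  (coset {x. x mod p = r} is C_(c r)).  pi i is the permutation of copy i, pi_1 = id.\<close>

definition F_vertices :: "nat \<Rightarrow> nat \<Rightarrow> nat \<Rightarrow> (nat \<times> nat) set" where
  "F_vertices t p q = {1..t} \<times> {0..<p * q}"

definition F_perm :: "(nat \<Rightarrow> nat \<Rightarrow> nat) \<Rightarrow> nat \<Rightarrow> nat \<Rightarrow> nat" where
  "F_perm \<pi> i = (if i = 1 then id else \<pi> i)"

definition F_adj :: "nat \<Rightarrow> nat \<Rightarrow> nat \<Rightarrow> (nat \<Rightarrow> nat) \<Rightarrow> (nat \<Rightarrow> nat \<Rightarrow> nat)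
     \<Rightarrow> nat \<times> nat \<Rightarrow> nat \<times> nat \<Rightarrow> bool" where
  "F_adj p q a c \<pi> u w \<longleftrightarrow> u \<noteq> w \<and>
     ((fst u = fst w \<and> Gamma_adj p q a (snd u) (snd w))
      \<or> inv_into UNIV (F_perm \<pi> (fst u)) (c (snd u mod p)) = inv_into UNIV (F_perm \<pi> (fst w)) (c (snd w mod p)))"

end

(*
  Write S = <a> for the subgroup of (Z/pqZ)^* generated by a; it has order p - 1 and contains -1,
  so Gamma_pq(a) is a well-defined undirected Cayley graph. Because a is a primitive root mod p,
  reduction mod p maps S bijectively onto the nonzero residues mod p, so every vertex of Gamma
  has exactly one neighbour in each coset of <p> other than its own. Multiplying by a suitable
  element of S moves any edge {x, y} to {1, 0}, which shows that Gamma is edge-regular with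
  lambda = |S \<inter> (S + 1)| common neighbours per edge.

  In F the cosets labelled m in the t copies form a clique of size tq = lambda + 2, and a vertex
  is adjacent to its p - 1 neighbours inside its copy and to the tq - 1 other members of its
  clique, giving degree p + lambda. Two adjacent vertices in the same clique share the other
  tq - 2 = lambda clique members; two adjacent vertices of one copy in different cliques share
  exactly their lambda common Gamma-neighbours. A vertex outside a clique meets it in the unique
  Gamma-neighbour lying in the appropriate coset of its own copy, so each clique is 1-regular.
*)

theory Submission
  imports Defs
begin

section \<open>Powers modulo an integer\<close>

lemma cong_diff_lcancel: "[c - a = c - b] (mod m) \<longleftrightarrow> [a = b] (mod m)" for a b c m :: int
  by (simp only: diff_conv_add_uminus cong_add_lcancel cong_minus_minus_iff)

lemma cong_diff_rcancel: "[a - c = b - c] (mod m) \<longleftrightarrow> [a = b] (mod m)" for a b c m :: int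
  by (simp only: diff_conv_add_uminus cong_add_rcancel)

definition is_power_mod :: "int \<Rightarrow> int \<Rightarrow> int \<Rightarrow> bool" where
  "is_power_mod m b z \<longleftrightarrow> (\<exists>j. [z = b ^ j] (mod m))"

lemma is_power_mod_cong: "[z = z'] (mod m) \<Longrightarrow> is_power_mod m b z = is_power_mod m b z'"
  unfolding is_power_mod_def by (meson cong_sym cong_trans)

lemma is_power_mod_power: "is_power_mod m b (b ^ j)"
  unfolding is_power_mod_def by (blast intro: cong_refl)

lemma is_power_mod_mult: "is_power_mod m b x \<Longrightarrow> is_power_mod m b y \<Longrightarrow> is_power_mod m b (x * y)"
  unfolding is_power_mod_def by (metis cong_mult power_add)

lemma is_power_mod_uminus:
  "is_power_mod m b (- 1) \<Longrightarrow> is_power_mod m b x \<Longrightarrow> is_power_mod m b (- x)"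
  using is_power_mod_mult by fastforce

lemma is_power_mod_coprime: "coprime b m \<Longrightarrow> is_power_mod m b z \<Longrightarrow> coprime z m"
  unfolding is_power_mod_def by (meson cong_imp_coprime cong_sym coprime_power_left_iff)

lemma power_cong_mod_period:
  assumes "[b ^ k = 1] (mod m)"
  shows "[b ^ i = b ^ (i mod k)] (mod m)"
proof -
  have "b ^ i = (b ^ k) ^ (i div k) * b ^ (i mod k)"
    by (metis div_mult_mod_eq power_add power_mult mult.commute)
  moreover have "[(b ^ k) ^ (i div k) * b ^ (i mod k) = 1 ^ (i div k) * b ^ (i mod k)] (mod m)"
    using assms by (intro cong_mult cong_pow cong_refl)
  ultimately show ?thesis by simp
qed

lemma is_power_mod_inverse:
  assumes "[b ^ k = 1] (mod m)" "k > 0" "is_power_mod m b x"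
  shows "\<exists>y. is_power_mod m b y \<and> [x * y = 1] (mod m)"
proof -
  obtain j where j: "[x = b ^ j] (mod m)" using assms(3) is_power_mod_def by auto
  have "b ^ j * b ^ ((k - 1) * j) = (b ^ k) ^ j"
    using assms(2) by (simp flip: power_add power_mult add: algebra_simps)
  moreover have "[x * b ^ ((k - 1) * j) = b ^ j * b ^ ((k - 1) * j)] (mod m)"
    using j by (intro cong_mult cong_refl)
  moreover have "[(b ^ k) ^ j = 1] (mod m)" using cong_pow[OF assms(1)] by simp
  ultimately show ?thesis using is_power_mod_power by (metis cong_trans)
qed

lemma card_residue_class_mod:
  assumes "r < m"
  shows "card {x \<in> {0..<m * n}. x mod m = r} = n"
proof -
  have "{x \<in> {0..<m * n}. x mod m = r} = (\<lambda>k. r + m * k) ` {0..<n}"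
  proof (intro equalityI subsetI)
    fix x assume "x \<in> {x \<in> {0..<m * n}. x mod m = r}"
    hence x: "x mod m = r" "x < m * n" by auto
    hence "x = r + m * (x div m)" using mod_mult_div_eq[of x m] by simp
    moreover have "x div m < n" using x(2) by (simp add: less_mult_imp_div_less mult.commute)
    ultimately show "x \<in> (\<lambda>k. r + m * k) ` {0..<n}" by force
  next
    fix x assume "x \<in> (\<lambda>k. r + m * k) ` {0..<n}"
    then obtain k where k: "k < n" "x = r + m * k" by auto
    have "r + m * k < m * (k + 1)" using assms by simp
    also have "\<dots> \<le> m * n" using k(1) by (intro mult_le_mono2) simp
    finally show "x \<in> {x \<in> {0..<m * n}. x mod m = r}" using k assms by simp
  qed
  moreover have "inj_on (\<lambda>k. r + m * k) {0..<n}" using assms by (intro inj_onI) simp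
  ultimately show ?thesis by (simp add: card_image)
qed

lemma add_lt_mult_minus_one:
  fixes m n :: nat
  assumes "3 \<le> m" "2 \<le> n"
  shows "m + (n - 2) < m * n - 1"
proof -
  obtain k l where "m = k + 3" "n = l + 2" using assms by (metis add.commute le_Suc_ex)
  thus ?thesis by (simp add: algebra_simps)
qed

section \<open>The Cayley graph Gamma_pq(a)\<close>

locale cayley_pq =
  fixes p q a :: nat
  assumes prime_p: "prime p" and prime_q: "prime q" and odd_p: "odd p" and odd_q: "odd q"
    and coprime_a: "coprime a (p * q)" and primroot_a: "residue_primroot p a"
    and half_power: "[int a ^ ((p - 1) div 2) = - 1] (mod int (p * q))"
begin

abbreviation in_S :: "int \<Rightarrow> bool" where
  "in_S \<equiv> is_power_mod (int (p * q)) (int a)"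

lemma p_ge_3: "p \<ge> 3"
  using prime_ge_2_nat[OF prime_p] odd_p by (cases "p = 2") auto

lemma q_ge_3: "q \<ge> 3"
  using prime_ge_2_nat[OF prime_q] odd_q by (cases "q = 2") auto

lemma power_p_minus_1_cong: "[int a ^ (p - 1) = 1] (mod int (p * q))"
proof -
  have "(p - 1) div 2 * 2 = p - 1" using odd_p by presburger
  hence "int a ^ (p - 1) = (int a ^ ((p - 1) div 2)) ^ 2" by (metis power_mult)
  moreover have "[(int a ^ ((p - 1) div 2)) ^ 2 = (- 1) ^ 2] (mod int (p * q))"
    using half_power by (rule cong_pow)
  ultimately show ?thesis by simp
qed

lemma in_S_minus_one: "in_S (- 1)"
  unfolding is_power_mod_def using half_power cong_sym by blast

lemma in_S_uminus: "in_S x \<Longrightarrow> in_S (- x)"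
  by (rule is_power_mod_uminus[OF in_S_minus_one])

lemma in_S_diff_commute: "in_S (x - y) \<longleftrightarrow> in_S (y - x)"
  using in_S_uminus by (metis minus_diff_eq)

lemma in_S_inverse: "in_S x \<Longrightarrow> \<exists>y. in_S y \<and> [x * y = 1] (mod int (p * q))"
  using is_power_mod_inverse[OF power_p_minus_1_cong] p_ge_3 by simp

lemma in_S_coprime: "in_S x \<Longrightarrow> coprime x (int (p * q))"
proof -
  have "coprime (int a) (int (p * q))" using coprime_a by (simp only: coprime_int_iff)
  thus "in_S x \<Longrightarrow> coprime x (int (p * q))" by (rule is_power_mod_coprime)
qed

lemma in_S_not_dvd_p: "in_S x \<Longrightarrow> \<not> int p dvd x"
proof
  assume "in_S x" "int p dvd x"
  hence "is_unit (int p)"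
    using coprime_common_divisor[OF in_S_coprime] by (metis dvd_triv_left of_nat_mult)
  thus False using p_ge_3 by simp
qed

lemma not_in_S_zero: "\<not> in_S 0"
  using in_S_not_dvd_p by auto

lemma ord_p_a: "ord p a = p - 1"
  using primroot_a prime_p by (simp add: residue_primroot_def totient_prime)

lemma coprime_p_a: "coprime p a"
  using primroot_a by (simp add: residue_primroot_def)

lemma in_S_eq_if_cong_mod_p:
  assumes "in_S x" "in_S y" "[x = y] (mod int p)"
  shows "[x = y] (mod int (p * q))"
proof -
  obtain i j where i: "[x = int a ^ i] (mod int (p * q))" and j: "[y = int a ^ j] (mod int (p * q))"
    using assms(1,2) is_power_mod_def by auto
  have "[x = int a ^ i] (mod int p)" "[y = int a ^ j] (mod int p)"
    using i j cong_modulus_mult[of _ _ "int p" "int q"] by simp_all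
  hence "[int (a ^ i) = int (a ^ j)] (mod int p)" using assms(3) by (metis cong_sym cong_trans of_nat_power)
  hence "[a ^ i = a ^ j] (mod p)" by (simp only: cong_int_iff)
  hence "[i = j] (mod (p - 1))" using order_divides_expdiff[OF coprime_p_a] ord_p_a by simp
  hence "i mod (p - 1) = j mod (p - 1)" by (simp only: cong_def)
  hence "[int a ^ i = int a ^ j] (mod int (p * q))"
    using power_cong_mod_period[OF power_p_minus_1_cong, of i]
      power_cong_mod_period[OF power_p_minus_1_cong, of j] by (metis cong_sym cong_trans)
  thus ?thesis using i j by (meson cong_sym cong_trans)
qed

lemma in_S_exists_cong_mod_p:
  assumes "\<not> int p dvd z"
  shows "\<exists>s. in_S s \<and> [s = z] (mod int p)"
proof -
  define r where "r = nat (z mod int p)"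
  have r_int: "int r = z mod int p" unfolding r_def using p_ge_3 by simp
  have "z mod int p \<noteq> 0" using assms by auto
  moreover have "0 \<le> z mod int p" "z mod int p < int p" using p_ge_3 by simp_all
  ultimately have "r \<in> {0<..<p}" using r_int by simp
  moreover have "(\<lambda>i. a ^ i mod p) ` {..<totient p} = totatives p"
    using residue_primroot_is_generator[OF _ primroot_a] p_ge_3 by (simp add: bij_betw_def)
  ultimately have "r \<in> (\<lambda>i. a ^ i mod p) ` {..<totient p}"
    using totatives_prime[OF prime_p] by simp
  then obtain i where "a ^ i mod p = r" by blast
  hence "int a ^ i mod int p = int r" by (metis of_nat_mod of_nat_power)
  hence "int a ^ i mod int p = z mod int p" using r_int by simp
  hence "[int a ^ i = z] (mod int p)" by (simp only: cong_def)
  thus ?thesis using is_power_mod_power by blast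
qed

lemma int_nat_mod_pq: "int (nat (z mod int (p * q))) = z mod int (p * q)"
  using p_ge_3 q_ge_3 by simp

lemma nat_mod_pq_less: "nat (z mod int (p * q)) < p * q"
  using p_ge_3 q_ge_3 by (simp add: nat_less_iff)

lemma int_mod_pq [simp]: "w < p * q \<Longrightarrow> int w mod (int p * int q) = int w"
proof -
  have "int w mod int (p * q) = int (w mod (p * q))" by (simp only: of_nat_mod)
  thus "w < p * q \<Longrightarrow> ?thesis" by simp
qed

lemma eq_if_cong_mod_pq:
  "x < p * q \<Longrightarrow> y < p * q \<Longrightarrow> [int x = int y] (mod int (p * q)) \<Longrightarrow> x = y"
  using cong_int_iff[of x y "p * q"] by (simp add: cong_def)

lemma nat_mod_pq_in_S_pq_iff: "nat (z mod int (p * q)) \<in> S_pq p q a \<longleftrightarrow> in_S z"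
proof
  assume "nat (z mod int (p * q)) \<in> S_pq p q a"
  then obtain j where "nat (z mod int (p * q)) = a ^ j mod (p * q)" by (auto simp: S_pq_def)
  hence "int (nat (z mod int (p * q))) = int (a ^ j mod (p * q))" by (simp only:)
  hence "z mod int (p * q) = int a ^ j mod int (p * q)"
    by (simp only: int_nat_mod_pq of_nat_mod of_nat_power)
  thus "in_S z" unfolding is_power_mod_def cong_def by blast
next
  assume "in_S z"
  then obtain j where j: "[z = int a ^ j] (mod int (p * q))" unfolding is_power_mod_def by blast
  define j' where "j' = j mod (p - 1)"
  have "[z = int a ^ j'] (mod int (p * q))"
    unfolding j'_def using j power_cong_mod_period[OF power_p_minus_1_cong] cong_trans by blast
  hence "z mod int (p * q) = int (a ^ j' mod (p * q))"
    by (simp only: cong_def of_nat_mod of_nat_power)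
  hence "nat (z mod int (p * q)) = a ^ j' mod (p * q)" by (simp only: nat_int)
  moreover have "j' < p - 1" unfolding j'_def using p_ge_3 by simp
  ultimately show "nat (z mod int (p * q)) \<in> S_pq p q a" unfolding S_pq_def by blast
qed

lemma mem_S_pq_iff: "s \<in> S_pq p q a \<longleftrightarrow> s < p * q \<and> in_S (int s)"
proof -
  have "s \<in> S_pq p q a \<Longrightarrow> s < p * q" using p_ge_3 q_ge_3 by (auto simp: S_pq_def)
  moreover have "s < p * q \<Longrightarrow> nat (int s mod int (p * q)) = s" by simp
  ultimately show ?thesis using nat_mod_pq_in_S_pq_iff[of "int s"] by auto
qed

definition lambda_set :: "nat set" where
  "lambda_set = {w \<in> {0..<p * q}. in_S (int w) \<and> in_S (int w - 1)}"

lemma S_pq_inter_shift1_eq: "S_pq p q a \<inter> shift1 (p * q) (S_pq p q a) = lambda_set"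
proof (intro equalityI subsetI)
  fix w assume "w \<in> S_pq p q a \<inter> shift1 (p * q) (S_pq p q a)"
  then obtain s where w: "w < p * q" "in_S (int w)" and s: "s \<in> S_pq p q a" "w = (s + 1) mod (p * q)"
    using mem_S_pq_iff by (auto simp: shift1_def)
  have "[int w = int s + 1] (mod int (p * q))"
    using s(2) unfolding cong_def by (simp add: of_nat_mod add.commute)
  hence "[int w - 1 = int s] (mod int (p * q))" using cong_diff[OF _ cong_refl[of 1]] by fastforce
  moreover have "in_S (int s)" using s(1) mem_S_pq_iff by simp
  ultimately have "in_S (int w - 1)" using is_power_mod_cong by blast
  thus "w \<in> lambda_set" unfolding lambda_set_def using w by simp
next
  fix w assume "w \<in> lambda_set"
  hence w: "w < p * q" "in_S (int w)" "in_S (int w - 1)" unfolding lambda_set_def by auto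
  define s where "s = nat ((int w - 1) mod int (p * q))"
  have "s \<in> S_pq p q a" unfolding s_def using nat_mod_pq_in_S_pq_iff w(3) by simp
  have "int ((s + 1) mod (p * q)) = (int s + 1) mod int (p * q)"
    by (simp only: of_nat_mod of_nat_add of_nat_1)
  also have "\<dots> = ((int w - 1) mod int (p * q) + 1) mod int (p * q)"
    unfolding s_def int_nat_mod_pq ..
  also have "\<dots> = int w" using w(1) by (simp add: mod_add_left_eq)
  finally have "w = (s + 1) mod (p * q)" by simp
  hence "w \<in> shift1 (p * q) (S_pq p q a)" unfolding shift1_def using \<open>s \<in> S_pq p q a\<close> by blast
  moreover have "w \<in> S_pq p q a" using mem_S_pq_iff w by simp
  ultimately show "w \<in> S_pq p q a \<inter> shift1 (p * q) (S_pq p q a)" by simp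
qed

definition gamma_nbrs :: "nat \<Rightarrow> nat set" where
  "gamma_nbrs x = {z \<in> {0..<p * q}. in_S (int z - int x)}"

lemma finite_gamma_nbrs: "finite (gamma_nbrs x)"
  unfolding gamma_nbrs_def by simp

lemma gamma_nbrs_less: "z \<in> gamma_nbrs x \<Longrightarrow> z < p * q"
  unfolding gamma_nbrs_def by simp

lemma cong_mod_p_iff: "x mod p = y mod p \<longleftrightarrow> [int x = int y] (mod int p)"
  by (simp add: cong_def flip: of_nat_mod)

lemma gamma_nbrs_mod_p_neq: "z \<in> gamma_nbrs x \<Longrightarrow> z mod p \<noteq> x mod p"
  unfolding gamma_nbrs_def cong_mod_p_iff cong_iff_dvd_diff using in_S_not_dvd_p by blast

lemma not_mem_gamma_nbrs_self: "x \<notin> gamma_nbrs x"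
  unfolding gamma_nbrs_def using not_in_S_zero by simp

lemma gamma_nbrs_inj_mod_p:
  assumes "z1 \<in> gamma_nbrs x" "z2 \<in> gamma_nbrs x" "z1 mod p = z2 mod p"
  shows "z1 = z2"
proof -
  have "[int z1 - int x = int z2 - int x] (mod int p)"
    using assms(3) unfolding cong_mod_p_iff by (intro cong_diff cong_refl)
  hence "[int z1 - int x = int z2 - int x] (mod int (p * q))"
    using in_S_eq_if_cong_mod_p assms(1,2) unfolding gamma_nbrs_def by blast
  hence "[int z1 = int z2] (mod int (p * q))" by (simp only: cong_diff_rcancel)
  thus ?thesis using assms(1,2) gamma_nbrs_less eq_if_cong_mod_pq by blast
qed

lemma eq_if_common_gamma_nbr_cong_mod_p:
  assumes "z \<in> gamma_nbrs x" "z \<in> gamma_nbrs y" "x < p * q" "y < p * q" "x mod p = y mod p"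
  shows "x = y"
proof -
  have "[int z - int x = int z - int y] (mod int p)"
    using assms(5) unfolding cong_mod_p_iff by (intro cong_diff cong_refl)
  hence "[int z - int x = int z - int y] (mod int (p * q))"
    using in_S_eq_if_cong_mod_p assms(1,2) unfolding gamma_nbrs_def by blast
  hence "[int x = int y] (mod int (p * q))" by (simp only: cong_diff_lcancel)
  thus ?thesis using assms(3,4) eq_if_cong_mod_pq by blast
qed

lemma gamma_nbrs_meets_residue_class:
  assumes "x < p * q" "r mod p \<noteq> x mod p"
  shows "\<exists>z \<in> gamma_nbrs x. z mod p = r mod p"
proof -
  have "\<not> int p dvd int r - int x"
    using assms(2) unfolding cong_mod_p_iff cong_iff_dvd_diff .
  then obtain s where s: "in_S s" "[s = int r - int x] (mod int p)"
    using in_S_exists_cong_mod_p by blast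
  define z where "z = nat ((int x + s) mod int (p * q))"
  have z_cong: "[int z = int x + s] (mod int (p * q))"
    unfolding z_def cong_def int_nat_mod_pq by simp
  hence "[int z - int x = int x + s - int x] (mod int (p * q))" by (simp only: cong_diff_rcancel)
  hence "[int z - int x = s] (mod int (p * q))" by simp
  hence "z \<in> gamma_nbrs x"
    unfolding gamma_nbrs_def using is_power_mod_cong s(1) nat_mod_pq_less z_def by auto
  moreover have "[int z = int r] (mod int p)"
  proof -
    have "[int z = int x + s] (mod int p)"
      using z_cong cong_modulus_mult[of _ _ "int p" "int q"] by simp
    moreover have "[int x + s = int x + (int r - int x)] (mod int p)"
      using s(2) by (intro cong_add cong_refl)
    ultimately show ?thesis using cong_trans by fastforce
  qed
  ultimately show ?thesis unfolding cong_mod_p_iff by blast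
qed

lemma card_gamma_nbrs: assumes "x < p * q" shows "card (gamma_nbrs x) = p - 1"
proof -
  have "inj_on (\<lambda>z. z mod p) (gamma_nbrs x)"
    using gamma_nbrs_inj_mod_p by (meson inj_onI)
  moreover have "(\<lambda>z. z mod p) ` gamma_nbrs x = {0..<p} - {x mod p}"
  proof (intro equalityI subsetI)
    fix r assume "r \<in> (\<lambda>z. z mod p) ` gamma_nbrs x"
    thus "r \<in> {0..<p} - {x mod p}" using gamma_nbrs_mod_p_neq p_ge_3 by auto
  next
    fix r assume r: "r \<in> {0..<p} - {x mod p}"
    hence "r mod p \<noteq> x mod p" by simp
    then obtain z where "z \<in> gamma_nbrs x" "z mod p = r mod p"
      using gamma_nbrs_meets_residue_class[OF assms] by blast
    thus "r \<in> (\<lambda>z. z mod p) ` gamma_nbrs x" using r by force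
  qed
  ultimately have "card (gamma_nbrs x) = card ({0..<p} - {x mod p})" by (metis card_image)
  also have "\<dots> = p - 1" using p_ge_3 by simp
  finally show ?thesis .
qed

lemma card_gamma_nbrs_residue_class:
  assumes "x < p * q" "r < p" "r \<noteq> x mod p"
  shows "card {z \<in> gamma_nbrs x. z mod p = r} = 1"
proof -
  have "r mod p \<noteq> x mod p" using assms(2,3) by simp
  then obtain z where z: "z \<in> gamma_nbrs x" "z mod p = r mod p"
    using gamma_nbrs_meets_residue_class[OF assms(1)] by blast
  hence "{z \<in> gamma_nbrs x. z mod p = r} = {z}" using gamma_nbrs_inj_mod_p assms(2) by auto
  thus ?thesis by simp
qed

lemma card_lambda_set_le_common_gamma_nbrs:
  assumes "x < p * q" "y < p * q" "in_S (int x - int y)"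
  shows "card lambda_set \<le> card (gamma_nbrs x \<inter> gamma_nbrs y)"
proof -
  txt \<open>With d = x - y, the point x - d w is a common neighbour of x and y iff w and w - 1 lie in S.\<close>
  define d where "d = int x - int y"
  define f where "f w = nat ((int x - d * int w) mod int (p * q))" for w
  have f_cong: "[int (f w) = int x - d * int w] (mod int (p * q))" for w
    unfolding f_def cong_def int_nat_mod_pq by simp
  have "inj_on f lambda_set"
  proof
    fix w1 w2 assume w: "w1 \<in> lambda_set" "w2 \<in> lambda_set" "f w1 = f w2"
    hence "[int x - d * int w1 = int x - d * int w2] (mod int (p * q))"
      using f_cong by (metis cong_sym cong_trans)
    hence "[d * int w1 = d * int w2] (mod int (p * q))" by (simp only: cong_diff_lcancel)
    hence "[int w1 = int w2] (mod int (p * q))"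
      using cong_mult_lcancel in_S_coprime assms(3) d_def by blast
    thus "w1 = w2" using w(1,2) eq_if_cong_mod_pq unfolding lambda_set_def by simp
  qed
  moreover have "f ` lambda_set \<subseteq> gamma_nbrs x \<inter> gamma_nbrs y"
  proof
    fix z assume "z \<in> f ` lambda_set"
    then obtain w where w: "w \<in> lambda_set" "z = f w" by blast
    have "[int z - int x = - (d * int w)] (mod int (p * q))"
      using cong_diff[OF f_cong cong_refl[of "int x"]] w(2) by simp
    moreover have "[int z - int y = - (d * (int w - 1))] (mod int (p * q))"
      using cong_diff[OF f_cong cong_refl[of "int y"]] w(2) unfolding d_def by (simp add: algebra_simps)
    moreover have "in_S (- (d * int w))" "in_S (- (d * (int w - 1)))"
      using w(1) assms(3) in_S_uminus is_power_mod_mult unfolding lambda_set_def d_def by auto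
    ultimately show "z \<in> gamma_nbrs x \<inter> gamma_nbrs y"
      unfolding gamma_nbrs_def using is_power_mod_cong nat_mod_pq_less w(2) f_def by auto
  qed
  ultimately show ?thesis using card_inj_on_le finite_gamma_nbrs by blast
qed

lemma card_common_gamma_nbrs_le_lambda_set:
  assumes "in_S (int x - int y)"
  shows "card (gamma_nbrs x \<inter> gamma_nbrs y) \<le> card lambda_set"
proof -
  define d where "d = int x - int y"
  obtain d' where d': "in_S d'" "[d * d' = 1] (mod int (p * q))"
    using in_S_inverse assms d_def by blast
  define g where "g z = nat ((d' * (int x - int z)) mod int (p * q))" for z
  have g_cong: "[int (g z) = d' * (int x - int z)] (mod int (p * q))" for z
    unfolding g_def cong_def int_nat_mod_pq by simp
  have "inj_on g (gamma_nbrs x \<inter> gamma_nbrs y)"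
  proof
    fix z1 z2 assume z: "z1 \<in> gamma_nbrs x \<inter> gamma_nbrs y" "z2 \<in> gamma_nbrs x \<inter> gamma_nbrs y" "g z1 = g z2"
    hence "[d' * (int x - int z1) = d' * (int x - int z2)] (mod int (p * q))"
      using g_cong by (metis cong_sym cong_trans)
    hence "[int x - int z1 = int x - int z2] (mod int (p * q))"
      using cong_mult_lcancel in_S_coprime d'(1) by blast
    hence "[int z1 = int z2] (mod int (p * q))" by (simp only: cong_diff_lcancel)
    thus "z1 = z2" using z(1,2) gamma_nbrs_less eq_if_cong_mod_pq by blast
  qed
  moreover have "g ` (gamma_nbrs x \<inter> gamma_nbrs y) \<subseteq> lambda_set"
  proof
    fix w assume "w \<in> g ` (gamma_nbrs x \<inter> gamma_nbrs y)"
    then obtain z where z: "z \<in> gamma_nbrs x" "z \<in> gamma_nbrs y" "w = g z" by blast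
    have "in_S (int x - int z)" "in_S (int y - int z)"
      using z(1,2) in_S_diff_commute unfolding gamma_nbrs_def by auto
    hence "in_S (d' * (int x - int z))" "in_S (d' * (int y - int z))"
      using d'(1) is_power_mod_mult by blast+
    moreover have "[int w - 1 = d' * (int y - int z)] (mod int (p * q))"
    proof -
      have "[int w - 1 = d' * (int x - int z) - d * d'] (mod int (p * q))"
        using cong_diff[OF g_cong cong_sym[OF d'(2)]] z(3) by simp
      thus ?thesis unfolding d_def by (simp add: algebra_simps)
    qed
    moreover have "[int w = d' * (int x - int z)] (mod int (p * q))" using g_cong z(3) by simp
    moreover have "w < p * q" using nat_mod_pq_less z(3) g_def by simp
    ultimately show "w \<in> lambda_set" unfolding lambda_set_def using is_power_mod_cong by auto
  qed
  moreover have "finite lambda_set" unfolding lambda_set_def by simp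
  ultimately show ?thesis using card_inj_on_le by blast
qed

lemma card_common_gamma_nbrs:
  "x < p * q \<Longrightarrow> y < p * q \<Longrightarrow> in_S (int x - int y) \<Longrightarrow>
    card (gamma_nbrs x \<inter> gamma_nbrs y) = card lambda_set"
  using card_lambda_set_le_common_gamma_nbrs card_common_gamma_nbrs_le_lambda_set by (meson le_antisym)

end

section \<open>The construction F\<close>

locale neumaier_construction = cayley_pq +
  fixes t :: nat and c :: "nat \<Rightarrow> nat" and \<pi> :: "nat \<Rightarrow> nat \<Rightarrow> nat"
  assumes t_times_q: "t * q = card lambda_set + 2"
    and bij_c: "bij_betw c {0..<p} {1..p}"
    and permutes_\<pi>: "\<forall>i\<in>{2..t}. \<pi> i permutes {1..p}"
begin

abbreviation V :: "(nat \<times> nat) set" where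
  "V \<equiv> F_vertices t p q"

abbreviation E :: "nat \<times> nat \<Rightarrow> nat \<times> nat \<Rightarrow> bool" where
  "E \<equiv> F_adj p q a c \<pi>"

text \<open>For x in C_(i,k) the paper's label is pi_i^-1(k); the vertices with label m form the clique
  clique m, which meets copy i in the residue class label_residue i m mod p.\<close>

definition clique_label :: "nat \<times> nat \<Rightarrow> nat" where
  "clique_label u = inv_into UNIV (F_perm \<pi> (fst u)) (c (snd u mod p))"

definition label_residue :: "nat \<Rightarrow> nat \<Rightarrow> nat" where
  "label_residue i m = inv_into {0..<p} c (F_perm \<pi> i m)"

definition clique :: "nat \<Rightarrow> (nat \<times> nat) set" where
  "clique m = {u \<in> V. clique_label u = m}"

definition copy_nbrs :: "nat \<times> nat \<Rightarrow> (nat \<times> nat) set" where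
  "copy_nbrs u = {fst u} \<times> gamma_nbrs (snd u)"

lemma t_pos: "t \<ge> 1"
  using t_times_q by (cases t) auto

lemma mem_V_iff: "(i, x) \<in> V \<longleftrightarrow> i \<in> {1..t} \<and> x < p * q"
  by (simp add: F_vertices_def)

lemma finite_V: "finite V"
  by (simp add: F_vertices_def)

lemma F_perm_permutes: "i \<in> {1..t} \<Longrightarrow> F_perm \<pi> i permutes {1..p}"
  unfolding F_perm_def using permutes_\<pi> by (cases "i = 1") (auto simp: permutes_id)

lemma F_adj_iff:
  "E u w \<longleftrightarrow> u \<noteq> w \<and>
    ((fst u = fst w \<and> in_S (int (snd u) - int (snd w))) \<or> clique_label u = clique_label w)"
  unfolding F_adj_def Gamma_adj_def nat_mod_pq_in_S_pq_iff clique_label_def ..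

lemma F_adj_sym: "E u w \<longleftrightarrow> E w u"
  using in_S_diff_commute unfolding F_adj_iff by auto

lemma clique_label_eq_iff:
  assumes "i \<in> {1..t}" "m \<in> {1..p}"
  shows "clique_label (i, x) = m \<longleftrightarrow> x mod p = label_residue i m"
proof -
  have "bij (F_perm \<pi> i)" using F_perm_permutes[OF assms(1)] permutes_bij by blast
  hence "clique_label (i, x) = m \<longleftrightarrow> F_perm \<pi> i m = c (x mod p)"
    unfolding clique_label_def using bij_inv_eq_iff[of _ m "c (x mod p)"] by auto
  also have "\<dots> \<longleftrightarrow> x mod p = label_residue i m"
  proof
    assume "F_perm \<pi> i m = c (x mod p)"
    thus "x mod p = label_residue i m"
      unfolding label_residue_def using bij_betw_inv_into_left[OF bij_c] p_ge_3 by simp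
  next
    have "F_perm \<pi> i m \<in> {1..p}" using permutes_in_image[OF F_perm_permutes[OF assms(1)]] assms(2) by simp
    moreover assume "x mod p = label_residue i m"
    ultimately show "F_perm \<pi> i m = c (x mod p)"
      unfolding label_residue_def using bij_betw_inv_into_right[OF bij_c] by simp
  qed
  finally show ?thesis .
qed

lemma label_residue_less: "i \<in> {1..t} \<Longrightarrow> m \<in> {1..p} \<Longrightarrow> label_residue i m < p"
  unfolding label_residue_def
  using permutes_in_image[OF F_perm_permutes] bij_betw_apply[OF bij_betw_inv_into[OF bij_c]] by force

lemma clique_label_in: "i \<in> {1..t} \<Longrightarrow> clique_label (i, x) \<in> {1..p}"
proof -
  assume i: "i \<in> {1..t}"
  have "c (x mod p) \<in> {1..p}" using bij_betw_apply[OF bij_c] p_ge_3 by simp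
  thus ?thesis unfolding clique_label_def
    using permutes_in_image[OF permutes_inv[OF F_perm_permutes[OF i]]] by simp
qed

lemma clique_label_eq_same_copy_iff:
  "i \<in> {1..t} \<Longrightarrow> clique_label (i, x) = clique_label (i, y) \<longleftrightarrow> x mod p = y mod p"
  using clique_label_eq_iff[of i "clique_label (i, y)" x] clique_label_eq_iff[of i "clique_label (i, y)" y]
    clique_label_in[of i y] by simp

lemma clique_label_in_V: "u \<in> V \<Longrightarrow> clique_label u \<in> {1..p}"
  using clique_label_in by (cases u) (simp add: mem_V_iff)

lemma clique_subset: "clique m \<subseteq> V"
  unfolding clique_def by auto

lemma finite_clique: "finite (clique m)"
  using finite_subset[OF clique_subset finite_V] .

lemma mem_own_clique: "u \<in> V \<Longrightarrow> u \<in> clique (clique_label u)"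
  unfolding clique_def by simp

lemma card_clique: assumes "m \<in> {1..p}" shows "card (clique m) = t * q"
proof -
  have "clique m = Sigma {1..t} (\<lambda>i. {x \<in> {0..<p * q}. x mod p = label_residue i m})"
  proof (intro equalityI subsetI)
    fix u assume "u \<in> clique m"
    then obtain i x where "u = (i, x)" "i \<in> {1..t}" "x < p * q" "clique_label (i, x) = m"
      unfolding clique_def F_vertices_def by auto
    thus "u \<in> Sigma {1..t} (\<lambda>i. {x \<in> {0..<p * q}. x mod p = label_residue i m})"
      using clique_label_eq_iff[OF _ assms] by simp
  next
    fix u assume "u \<in> Sigma {1..t} (\<lambda>i. {x \<in> {0..<p * q}. x mod p = label_residue i m})"
    thus "u \<in> clique m"
      unfolding clique_def F_vertices_def using clique_label_eq_iff[OF _ assms] by auto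
  qed
  hence "card (clique m) = (\<Sum>i\<in>{1..t}. card {x \<in> {0..<p * q}. x mod p = label_residue i m})"
    by (simp add: card_SigmaI)
  also have "\<dots> = (\<Sum>i\<in>{1..t}. q)"
    using card_residue_class_mod label_residue_less assms by (intro sum.cong) auto
  finally show ?thesis by simp
qed

lemma finite_copy_nbrs: "finite (copy_nbrs u)"
  unfolding copy_nbrs_def using finite_gamma_nbrs by simp

lemma card_copy_nbrs: "u \<in> V \<Longrightarrow> card (copy_nbrs u) = p - 1"
  unfolding copy_nbrs_def using card_gamma_nbrs
  by (cases u) (simp add: card_cartesian_product_singleton mem_V_iff)

lemma copy_nbrs_clique_disjoint:
  assumes "u \<in> V" shows "copy_nbrs u \<inter> clique (clique_label u) = {}"
proof (cases u)
  case (Pair i x)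
  hence "i \<in> {1..t}" using assms by (simp add: mem_V_iff)
  thus ?thesis unfolding Pair copy_nbrs_def clique_def
    using clique_label_eq_same_copy_iff gamma_nbrs_mod_p_neq by auto
qed

lemma nbrs_F_eq:
  assumes "u \<in> V"
  shows "nbrs V E u = copy_nbrs u \<union> (clique (clique_label u) - {u})"
proof (intro equalityI subsetI)
  fix w assume "w \<in> nbrs V E u"
  hence w: "w \<in> V" "E u w" unfolding nbrs_def by auto
  show "w \<in> copy_nbrs u \<union> (clique (clique_label u) - {u})"
  proof (cases "clique_label u = clique_label w")
    case True thus ?thesis using w unfolding clique_def F_adj_iff by auto
  next
    case False
    hence "fst w = fst u" "in_S (int (snd w) - int (snd u))"
      using w(2) in_S_diff_commute unfolding F_adj_iff by auto
    thus ?thesis using w(1) unfolding copy_nbrs_def gamma_nbrs_def F_vertices_def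
      by (cases w) auto
  qed
next
  fix w assume w: "w \<in> copy_nbrs u \<union> (clique (clique_label u) - {u})"
  show "w \<in> nbrs V E u"
  proof (cases "w \<in> copy_nbrs u")
    case True
    then obtain z where z: "w = (fst u, z)" "z \<in> gamma_nbrs (snd u)" unfolding copy_nbrs_def by auto
    have "z \<noteq> snd u" using z(2) not_mem_gamma_nbrs_self by blast
    moreover have "in_S (int (snd u) - int z)" using z(2) in_S_diff_commute unfolding gamma_nbrs_def by auto
    ultimately show ?thesis unfolding nbrs_def F_adj_iff
      using z assms gamma_nbrs_less by (cases u) (auto simp: mem_V_iff)
  next
    case False
    thus ?thesis using w unfolding nbrs_def clique_def F_adj_iff by auto
  qed
qed

lemma card_nbrs_F: assumes "u \<in> V" shows "card (nbrs V E u) = p + card lambda_set"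
proof -
  have "card (nbrs V E u) = card (copy_nbrs u) + card (clique (clique_label u) - {u})"
    unfolding nbrs_F_eq[OF assms] using copy_nbrs_clique_disjoint[OF assms]
    by (intro card_Un_disjoint finite_copy_nbrs) (auto simp: finite_clique)
  also have "\<dots> = (p - 1) + (t * q - 1)"
    using card_copy_nbrs card_clique clique_label_in_V mem_own_clique finite_clique assms by simp
  finally show ?thesis using t_times_q p_ge_3 by simp
qed

lemma common_nbrs_same_clique:
  assumes "u \<in> V" "w \<in> V" "u \<noteq> w" "clique_label u = clique_label w"
  shows "nbrs V E u \<inter> nbrs V E w = clique (clique_label u) - {u, w}"
proof -
  have "copy_nbrs u \<inter> copy_nbrs w = {}"
  proof (cases u, cases w)
    fix i x j y assume uw: "u = (i, x)" "w = (j, y)"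
    have "x = y" if "i = j" "z \<in> gamma_nbrs x" "z \<in> gamma_nbrs y" for z
      using eq_if_common_gamma_nbr_cong_mod_p[OF that(2,3)] clique_label_eq_same_copy_iff
        assms(1,2,4) uw that(1) by (simp add: mem_V_iff)
    thus ?thesis using assms(3) uw unfolding copy_nbrs_def by auto
  qed
  thus ?thesis using copy_nbrs_clique_disjoint[OF assms(1)] copy_nbrs_clique_disjoint[OF assms(2)] assms(4)
    unfolding nbrs_F_eq[OF assms(1)] nbrs_F_eq[OF assms(2)] by auto
qed

lemma copy_nbrs_inter_clique_subset:
  assumes "i \<in> {1..t}" "y \<in> gamma_nbrs x"
  shows "copy_nbrs (i, x) \<inter> clique (clique_label (i, y)) \<subseteq> {(i, y)}"
proof
  fix v assume "v \<in> copy_nbrs (i, x) \<inter> clique (clique_label (i, y))"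
  then obtain z where z: "v = (i, z)" "z \<in> gamma_nbrs x" "clique_label (i, z) = clique_label (i, y)"
    unfolding copy_nbrs_def clique_def by auto
  hence "z = y" using clique_label_eq_same_copy_iff[OF assms(1)] gamma_nbrs_inj_mod_p[OF _ assms(2)] by blast
  thus "v \<in> {(i, y)}" using z(1) by simp
qed

lemma common_nbrs_other_clique:
  assumes "(i, x) \<in> V" "(i, y) \<in> V" "in_S (int x - int y)"
    and "clique_label (i, x) \<noteq> clique_label (i, y)"
  shows "nbrs V E (i, x) \<inter> nbrs V E (i, y) = {i} \<times> (gamma_nbrs x \<inter> gamma_nbrs y)"
proof -
  have i: "i \<in> {1..t}" and "x < p * q" "y < p * q" using assms(1,2) by (simp_all add: mem_V_iff)
  hence "x \<in> gamma_nbrs y" "y \<in> gamma_nbrs x"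
    using assms(3) in_S_diff_commute unfolding gamma_nbrs_def by auto
  hence "copy_nbrs (i, x) \<inter> clique (clique_label (i, y)) \<subseteq> {(i, y)}"
    "copy_nbrs (i, y) \<inter> clique (clique_label (i, x)) \<subseteq> {(i, x)}"
    using copy_nbrs_inter_clique_subset[OF i] by blast+
  moreover have "clique (clique_label (i, x)) \<inter> clique (clique_label (i, y)) = {}"
    using assms(4) unfolding clique_def by auto
  ultimately show ?thesis unfolding nbrs_F_eq[OF assms(1)] nbrs_F_eq[OF assms(2)] copy_nbrs_def
    by auto
qed

lemma card_common_nbrs_F:
  assumes "u \<in> V" "w \<in> V" "E u w"
  shows "card (nbrs V E u \<inter> nbrs V E w) = card lambda_set"
proof (cases "clique_label u = clique_label w")
  case True
  have "u \<noteq> w" using assms(3) unfolding F_adj_iff by simp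
  hence "card (clique (clique_label u) - {u, w}) = t * q - 2"
    using card_clique[OF clique_label_in_V[OF assms(1)]] mem_own_clique[OF assms(1)]
      mem_own_clique[OF assms(2)] True finite_clique by (simp add: card_Diff_subset)
  thus ?thesis using common_nbrs_same_clique[OF assms(1,2) \<open>u \<noteq> w\<close> True] t_times_q by simp
next
  case False
  obtain i x y where uw: "u = (i, x)" "w = (i, y)" and "in_S (int x - int y)"
    using assms(3) False unfolding F_adj_iff by (cases u, cases w) auto
  moreover have "x < p * q" "y < p * q" using assms(1,2) uw by (simp_all add: mem_V_iff)
  ultimately show ?thesis
    using common_nbrs_other_clique assms(1,2) False card_common_gamma_nbrs
    by (simp add: card_cartesian_product_singleton)
qed

lemma card_nbrs_inter_clique:
  assumes "m \<in> {1..p}" "v \<in> V - clique m"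
  shows "card (nbrs V E v \<inter> clique m) = 1"
proof (cases v)
  case (Pair j y)
  have j: "j \<in> {1..t}" and y: "y < p * q" using assms(2) Pair by (auto simp: mem_V_iff)
  have "clique_label v \<noteq> m" using assms(2) unfolding clique_def by auto
  hence "nbrs V E v \<inter> clique m = copy_nbrs v \<inter> clique m"
    unfolding nbrs_F_eq[OF DiffD1[OF assms(2)]] clique_def by auto
  also have "\<dots> = {j} \<times> {z \<in> gamma_nbrs y. z mod p = label_residue j m}"
    unfolding Pair copy_nbrs_def clique_def
    using clique_label_eq_iff[OF j assms(1)] gamma_nbrs_less j by (auto simp: mem_V_iff)
  finally have "card (nbrs V E v \<inter> clique m) = card {z \<in> gamma_nbrs y. z mod p = label_residue j m}"
    by (simp add: card_cartesian_product_singleton)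
  moreover have "label_residue j m \<noteq> y mod p"
    using \<open>clique_label v \<noteq> m\<close> clique_label_eq_iff[OF j assms(1)] Pair by auto
  ultimately show ?thesis
    using card_gamma_nbrs_residue_class[OF y label_residue_less[OF j assms(1)]] by simp
qed

lemma F_not_complete: "\<not> complete_graph V E"
proof
  assume "complete_graph V E"
  txt \<open>Then the degree p + lambda would equal tpq - 1, which is too large.\<close>
  have u: "(1, 0) \<in> V" using t_pos p_ge_3 q_ge_3 by (simp add: mem_V_iff)
  have "nbrs V E (1, 0) = V - {(1, 0)}"
  proof
    show "nbrs V E (1, 0) \<subseteq> V - {(1, 0)}" unfolding nbrs_def F_adj_def by auto
    show "V - {(1, 0)} \<subseteq> nbrs V E (1, 0)"
      using \<open>complete_graph V E\<close> u unfolding complete_graph_def nbrs_def by auto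
  qed
  hence "p + (t * q - 2) = p * (t * q) - 1"
    using card_nbrs_F[OF u] t_times_q finite_V u by (simp add: F_vertices_def mult.commute mult.left_commute)
  moreover have "p + (t * q - 2) < p * (t * q) - 1"
    using add_lt_mult_minus_one[OF p_ge_3, of "t * q"] t_times_q by linarith
  ultimately show False by simp
qed

lemma F_has_edge: "\<exists>x\<in>V. \<exists>y\<in>V. E x y"
proof -
  have "(1, 0) \<in> V" "(1, p) \<in> V" using t_pos p_ge_3 q_ge_3 by (auto simp: mem_V_iff)
  moreover have "E (1, 0) (1, p)"
    unfolding F_adj_iff using clique_label_eq_same_copy_iff[of 1 0 p] t_pos p_ge_3 by auto
  ultimately show ?thesis by blast
qed

lemma neumaier_graph_F:
  "neumaier_graph V E (t * p * q) (p + card lambda_set) (card lambda_set) 1 (card lambda_set + 2)"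
proof -
  have "simple_graph V E" unfolding simple_graph_def using finite_V F_adj_sym by (simp add: F_adj_iff)
  moreover have "regular_graph V E (p + card lambda_set)"
    unfolding regular_graph_def using card_nbrs_F by blast
  moreover have "edge_regular V E (card lambda_set)"
    unfolding edge_regular_def using calculation(2) F_has_edge card_common_nbrs_F by blast
  moreover have "1 \<in> {1..p}" using p_ge_3 by simp
  moreover have "is_clique V E (clique 1)"
    unfolding is_clique_def clique_def F_adj_iff by auto
  ultimately show ?thesis
    unfolding neumaier_graph_def using F_not_complete card_clique t_times_q card_nbrs_inter_clique
    by (auto simp: F_vertices_def)
qed

end

theorem mainTheorem6:
  fixes p q a t :: nat and c :: "nat \<Rightarrow> nat" and \<pi> :: "nat \<Rightarrow> nat \<Rightarrow> nat"
  assumes "prime p" and "prime q" and "odd p" and "odd q" and "p \<noteq> q"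
    and "a < p * q" and "coprime a (p * q)"
    and "residue_primroot p a"
    and "[int a ^ ((p - 1) div 2) = - 1] (mod int (p * q))"
    and "[int (card (S_pq p q a \<inter> shift1 (p * q) (S_pq p q a))) = - 2] (mod int q)"
    and "t = (card (S_pq p q a \<inter> shift1 (p * q) (S_pq p q a)) + 2) div q"
    and "bij_betw c {0..<p} {1..p}"
    and "\<forall>i\<in>{2..t}. \<pi> i permutes {1..p}"
  shows "neumaier_graph (F_vertices t p q) (F_adj p q a c \<pi>)
           (t * p * q)
           (p + card (S_pq p q a \<inter> shift1 (p * q) (S_pq p q a)))
           (card (S_pq p q a \<inter> shift1 (p * q) (S_pq p q a)))
           1
           (card (S_pq p q a \<inter> shift1 (p * q) (S_pq p q a)) + 2)"
proof -
  interpret cayley_pq p q a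
    using assms by unfold_locales
  have lambda: "card (S_pq p q a \<inter> shift1 (p * q) (S_pq p q a)) = card lambda_set"
    using S_pq_inter_shift1_eq by simp
  have "int q dvd int (card lambda_set + 2)"
    using assms(10) unfolding lambda cong_iff_dvd_diff by (simp add: add.commute)
  hence "t * q = card lambda_set + 2"
    using assms(11) unfolding lambda by (simp only: of_nat_dvd_iff dvd_div_mult_self)
  then interpret neumaier_construction p q a t c \<pi>
    using assms(12,13) by unfold_locales
  show ?thesis
    using neumaier_graph_F unfolding lambda .
qed

end
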